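(* Let $g\ge 2$ and let $\Lambda_1,\dots,\Lambda_g$ be lattices in $\mathbb{C}$ such that $\Lambda_1+\cdots+\Lambda_g$ is not discrete. Then there is $2\le j\le g$ such that $\Lambda_1+\Lambda_j$ is not discrete. Moreover, if $\Lambda_1+\cdots+\Lambda_g$ is dense in $\mathbb{C}$, then for such a $j$ there is $2\le k\le g$ such that $\Lambda_1+\Lambda_j+\Lambda_k$ is dense in $\mathbb{C}$.
   Context: A lattice in $\mathbb{C}$ is a discrete subgroup $\mathbb{Z}a+\mathbb{Z}b$ with $a,b$ linearly independent over $\mathbb{R}$. *)

theory Defs
  imports "HOL-Analysis.Analysis" "HOL-Library.Set_Algebras"
begin

text \<open>Sums of sets are Minkowski sums (set_plus from Set_Algebras); discreteness is the
  library notion discrete (every point isolated).\<close>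

definition is_lattice :: "complex set \<Rightarrow> bool" where
  "is_lattice L \<longleftrightarrow> (\<exists>a b. (\<forall>r s :: real. r *\<^sub>R a + s *\<^sub>R b = 0 \<longrightarrow> r = 0 \<and> s = 0) \<and>
      L = {of_int m * a + of_int n * b | m n :: int. True})"

end

theory Submission
  imports Defs
begin

text \<open>If every \<open>\<Lambda>\<^sub>1 + \<Lambda>\<^sub>j\<close> is discrete, then \<open>\<Lambda>\<^sub>1\<close> is cocompact in the discrete group
  \<open>\<Lambda>\<^sub>1 + \<Lambda>\<^sub>j\<close>, so by pigeonhole some positive multiple of each generator of \<open>\<Lambda>\<^sub>j\<close> lies in
  \<open>\<Lambda>\<^sub>1\<close>; hence \<open>N (\<Lambda>\<^sub>1 + \<dots> + \<Lambda>\<^sub>g) \<subseteq> \<Lambda>\<^sub>1\<close> for some \<open>N > 0\<close>, and the sum is discrete.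

  If \<open>H = \<Lambda>\<^sub>1 + \<Lambda>\<^sub>j\<close> is not discrete, its closure contains a line \<open>\<real>d\<close>, and any subgroup
  containing \<open>H\<close> is dense as soon as its projection onto the direction orthogonal to \<open>d\<close>
  is not discrete. If these projections were discrete for all \<open>H + \<Lambda>\<^sub>k\<close>, the same pigeonhole
  argument, applied to the projections, would place the projection of
  \<open>N (\<Lambda>\<^sub>1 + \<dots> + \<Lambda>\<^sub>g)\<close> in a cyclic group, so the sum could not be dense.\<close>

definition add_subgroup :: "'a::ab_group_add set \<Rightarrow> bool" where
  "add_subgroup G \<longleftrightarrow> 0 \<in> G \<and> (\<forall>x\<in>G. \<forall>y\<in>G. x - y \<in> G)"

lemma add_subgroup_0: "add_subgroup G \<Longrightarrow> 0 \<in> G"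
  by (simp add: add_subgroup_def)

lemma add_subgroup_diff: "add_subgroup G \<Longrightarrow> x \<in> G \<Longrightarrow> y \<in> G \<Longrightarrow> x - y \<in> G"
  by (simp add: add_subgroup_def)

lemma add_subgroup_uminus: "add_subgroup G \<Longrightarrow> x \<in> G \<Longrightarrow> - x \<in> G"
  by (metis add_subgroup_0 add_subgroup_diff diff_0)

lemma add_subgroup_add: "add_subgroup G \<Longrightarrow> x \<in> G \<Longrightarrow> y \<in> G \<Longrightarrow> x + y \<in> G"
  by (metis add_subgroup_diff add_subgroup_uminus diff_minus_eq_add)

lemma add_subgroup_of_nat_mult:
  "add_subgroup G \<Longrightarrow> x \<in> G \<Longrightarrow> of_nat n * (x :: 'a::ring_1) \<in> G"
  by (induction n) (auto simp: add_subgroup_0 add_subgroup_add algebra_simps)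

lemma add_subgroup_of_int_mult:
  assumes "add_subgroup G" "x \<in> G"
  shows "of_int m * (x :: 'a::ring_1) \<in> G"
proof (cases "m \<ge> 0")
  case True
  then show ?thesis using add_subgroup_of_nat_mult[OF assms, of "nat m"] by simp
next
  case False
  then have "of_int m * x = - (of_nat (nat (- m)) * x)" by simp
  then show ?thesis using assms add_subgroup_of_nat_mult add_subgroup_uminus by metis
qed

lemma add_subgroup_scaleR_of_int:
  assumes "add_subgroup G" "x \<in> G"
  shows "real_of_int m *\<^sub>R (x :: 'a::real_vector) \<in> G"
proof -
  have nat: "real n *\<^sub>R x \<in> G" for n
    by (induction n) (auto simp: assms add_subgroup_0 add_subgroup_add scaleR_left_distrib)
  show ?thesis
  proof (cases "m \<ge> 0")
    case True
    then show ?thesis using nat[of "nat m"] by simp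
  next
    case False
    then have "real_of_int m *\<^sub>R x = - (real (nat (- m)) *\<^sub>R x)" by simp
    then show ?thesis using nat add_subgroup_uminus[OF assms(1)] by metis
  qed
qed

lemma add_subgroup_set_plus: "add_subgroup A \<Longrightarrow> add_subgroup B \<Longrightarrow> add_subgroup (A + B)"
  unfolding add_subgroup_def set_plus_def
  by (auto; metis add_0 add_diff_add)

lemma add_subgroup_set_sum:
  "finite I \<Longrightarrow> (\<And>i. i \<in> I \<Longrightarrow> add_subgroup (A i)) \<Longrightarrow> add_subgroup (sum A I)"
proof (induction I rule: finite_induct)
  case empty
  show ?case by (simp add: add_subgroup_def)
next
  case (insert i I)
  then show ?case by (simp add: add_subgroup_set_plus)
qed

lemma subset_set_plus_right: "0 \<in> B \<Longrightarrow> A \<subseteq> A + (B :: 'a::comm_monoid_add set)"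
  using set_zero_plus2 by (metis add.commute)

lemma add_subgroup_image:
  assumes G: "add_subgroup G" and f: "\<And>x y. f (x - y) = f x - f y"
  shows "add_subgroup (f ` G)"
proof -
  have "f 0 = 0" using f[of 0 0] by simp
  then have "0 \<in> f ` G" using G add_subgroup_0 by (metis image_eqI)
  moreover have "f x - f y \<in> f ` G" if "x \<in> G" "y \<in> G" for x y
    using that f[of x y] G add_subgroup_diff by (metis image_eqI)
  ultimately show ?thesis unfolding add_subgroup_def by blast
qed

lemma add_subgroup_vimage:
  assumes L: "add_subgroup L" and f: "\<And>x y. f (x - y) = f x - f y"
  shows "add_subgroup (f -` L)"
proof -
  have "f 0 = 0" using f[of 0 0] by simp
  then show ?thesis using L f unfolding add_subgroup_def by auto
qed

lemma add_subgroup_int_multiples: "add_subgroup (range (\<lambda>m::int. of_int m * (p :: 'a::ring_1)))"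
  unfolding add_subgroup_def
proof (intro conjI ballI)
  show "0 \<in> range (\<lambda>m::int. of_int m * p)" by (rule range_eqI[of _ _ 0]) simp
  fix x y assume "x \<in> range (\<lambda>m::int. of_int m * p)" "y \<in> range (\<lambda>m::int. of_int m * p)"
  then obtain m m' where "x = of_int m * p" "y = of_int m' * p" by blast
  then have "x - y = of_int (m - m') * p" by (simp add: algebra_simps)
  then show "x - y \<in> range (\<lambda>m::int. of_int m * p)" by blast
qed

lemma discrete_add_subgroup_iff:
  fixes G :: "'a::real_normed_vector set"
  assumes "add_subgroup G"
  shows "discrete G \<longleftrightarrow> (\<exists>e>0. \<forall>x\<in>G. x \<noteq> 0 \<longrightarrow> e \<le> norm x)"
proof
  assume "discrete G"
  then have "0 isolated_in G" using assms add_subgroup_0 discreteD by blast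
  then obtain e where "e > 0" "\<And>y. y \<in> G \<Longrightarrow> dist 0 y < e \<Longrightarrow> y = 0"
    by (metis isolated_inE_dist)
  then show "\<exists>e>0. \<forall>x\<in>G. x \<noteq> 0 \<longrightarrow> e \<le> norm x"
    by (metis dist_0_norm not_le)
next
  assume "\<exists>e>0. \<forall>x\<in>G. x \<noteq> 0 \<longrightarrow> e \<le> norm x"
  then obtain e where e: "e > 0" "\<forall>x\<in>G. x \<noteq> 0 \<longrightarrow> e \<le> norm x" by blast
  show "discrete G"
  proof (rule discreteI)
    fix x assume "x \<in> G"
    show "x isolated_in G" unfolding isolated_in_dist_Ex_iff
    proof (intro conjI exI[of _ e] ballI impI)
      fix y assume "y \<in> G" "dist x y < e"
      then have "y - x \<in> G" using assms \<open>x \<in> G\<close> add_subgroup_diff by blast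
      then show "y = x" using e \<open>dist x y < e\<close>
        by (metis dist_norm norm_minus_commute not_le right_minus_eq)
    qed (use \<open>x \<in> G\<close> e in auto)
  qed
qed

definition torsion_mod :: "'a::semiring_1 set \<Rightarrow> 'a set \<Rightarrow> bool" where
  "torsion_mod L A \<longleftrightarrow> (\<exists>n>0. \<forall>x\<in>A. of_nat n * x \<in> L)"

lemma torsion_mod_subset: "torsion_mod L A \<Longrightarrow> B \<subseteq> A \<Longrightarrow> torsion_mod L B"
  unfolding torsion_mod_def by blast

lemma torsion_mod_refl: "torsion_mod A A"
  unfolding torsion_mod_def by (intro exI[of _ 1]) simp

lemma torsion_mod_set_plus:
  fixes L :: "'a::comm_ring_1 set"
  assumes L: "add_subgroup L" and "torsion_mod L A" "torsion_mod L B"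
  shows "torsion_mod L (A + B)"
proof -
  obtain m n where mn: "m > 0" "n > 0" "\<forall>x\<in>A. of_nat m * x \<in> L" "\<forall>y\<in>B. of_nat n * y \<in> L"
    using assms(2,3) unfolding torsion_mod_def by blast
  show ?thesis unfolding torsion_mod_def
  proof (intro exI[of _ "m * n"] conjI ballI)
    fix z assume "z \<in> A + B"
    then obtain x y where "x \<in> A" "y \<in> B" "z = x + y" by (auto elim: set_plus_elim)
    then have "of_nat (m * n) * z = of_nat n * (of_nat m * x) + of_nat m * (of_nat n * y)"
      by (simp add: algebra_simps)
    then show "of_nat (m * n) * z \<in> L"
      using mn \<open>x \<in> A\<close> \<open>y \<in> B\<close> L by (metis add_subgroup_add add_subgroup_of_nat_mult)
  qed (use mn in simp)
qed

lemma torsion_mod_set_sum: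
  fixes L :: "'a::comm_ring_1 set"
  assumes L: "add_subgroup L" and "finite I" "\<And>i. i \<in> I \<Longrightarrow> torsion_mod L (A i)"
  shows "torsion_mod L (sum A I)"
  using assms(2,3)
proof (induction I rule: finite_induct)
  case empty
  show ?case using add_subgroup_0[OF L] by (auto simp: torsion_mod_def intro: exI[of _ 1])
next
  case (insert i I)
  then show ?case by (simp add: torsion_mod_set_plus[OF L])
qed

lemma torsion_mod_vimage:
  assumes "\<And>n x. f (of_nat n * x) = of_nat n * f x" "torsion_mod L (f ` A)"
  shows "torsion_mod (f -` L) A"
  using assms unfolding torsion_mod_def by auto

lemma discrete_if_torsion_mod:
  fixes L S :: "'a::real_normed_div_algebra set"
  assumes "add_subgroup L" "discrete L" "add_subgroup S" "torsion_mod L S"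
  shows "discrete S"
proof -
  obtain e where e: "e > 0" "\<forall>x\<in>L. x \<noteq> 0 \<longrightarrow> e \<le> norm x"
    using assms(2) discrete_add_subgroup_iff[OF assms(1)] by auto
  obtain N :: nat where N: "N > 0" "\<forall>x\<in>S. of_nat N * x \<in> L"
    using assms(4) unfolding torsion_mod_def by blast
  show ?thesis unfolding discrete_add_subgroup_iff[OF assms(3)]
  proof (intro exI[of _ "e / N"] conjI ballI impI)
    show "e / N > 0" using e N by simp
    fix x assume "x \<in> S" "x \<noteq> 0"
    then have "norm (of_nat N * x) = real N * norm x" "real N * norm x > 0"
      using N by (simp_all add: norm_mult)
    moreover have "of_nat N * x \<in> L" using N \<open>x \<in> S\<close> by blast
    ultimately have "e \<le> real N * norm x" using e(2) by force
    then show "e / N \<le> norm x" using N by (simp add: divide_le_eq mult.commute)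
  qed
qed

lemma torsion_mod_cocompact_subgroup:
  fixes G L :: "'a::{real_normed_algebra_1,heine_borel} set"
  assumes G: "add_subgroup G" "discrete G" and L: "add_subgroup L" "L \<subseteq> G"
    and cocompact: "\<And>z. z \<in> G \<Longrightarrow> \<exists>l\<in>L. norm (z - l) \<le> R" and u: "u \<in> G"
  shows "torsion_mod L {u}"
proof -
  obtain e where e: "e > 0" "\<forall>x\<in>G. x \<noteq> 0 \<longrightarrow> e \<le> norm x"
    using G(2) discrete_add_subgroup_iff[OF G(1)] by auto
  have "\<forall>n. \<exists>l\<in>L. norm (of_nat n * u - l) \<le> R"
    using cocompact add_subgroup_of_nat_mult[OF G(1) u] by blast
  then obtain l where l: "\<And>n. l n \<in> L" "\<And>n. norm (of_nat n * u - l n) \<le> R"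
    by metis
  \<comment> \<open>The points \<open>n u - l n\<close> lie in the finite set \<open>G \<inter> cball 0 R\<close>, so two of them coincide.\<close>
  define f where "f n = of_nat n * u - l n" for n
  define F where "F = G \<inter> cball 0 R"
  have "uniform_discrete F"
  proof (rule uniformI2[OF e(1)])
    fix x y assume "x \<in> F" "y \<in> F" "x \<noteq> y"
    then have "x - y \<in> G" "x - y \<noteq> 0" using G add_subgroup_diff unfolding F_def by auto
    then show "e \<le> dist x y" using e(2) by (simp add: dist_norm)
  qed
  then have "finite F" using uniform_discrete_finite_iff unfolding F_def by blast
  moreover have "f n \<in> F" for n
  proof -
    have "of_nat n * u \<in> G" "l n \<in> G" using add_subgroup_of_nat_mult[OF G(1) u] l(1) L(2) by auto
    then show ?thesis using l(2) add_subgroup_diff[OF G(1)] unfolding F_def f_def by auto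
  qed
  then have "range f \<subseteq> F" by blast
  ultimately obtain i j where ij: "i < j" "f i = f j"
    by (metis finite_subset finite_imageD infinite_UNIV_nat inj_def linorder_neqE_nat)
  then have "of_nat (j - i) * u = l j - l i"
    unfolding f_def by (simp add: of_nat_diff algebra_simps)
  then have "of_nat (j - i) * u \<in> L" using l L add_subgroup_diff by metis
  then show ?thesis unfolding torsion_mod_def using ij by (intro exI[of _ "j - i"]) auto
qed

definition int_span2 :: "'a::ring_1 \<Rightarrow> 'a \<Rightarrow> 'a set" where
  "int_span2 a b = {of_int m * a + of_int n * b | m n :: int. True}"

lemma int_span2_generators: "a \<in> int_span2 a b" "b \<in> int_span2 a b"
  unfolding int_span2_def
  by (rule CollectI, rule exI[of _ 1], rule exI[of _ 0], simp)
    (rule CollectI, rule exI[of _ 0], rule exI[of _ 1], simp)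

lemma add_subgroup_int_span2: "add_subgroup (int_span2 a b)"
  unfolding add_subgroup_def
proof (intro conjI ballI)
  show "0 \<in> int_span2 a b" unfolding int_span2_def by (auto intro!: exI[of _ 0])
  fix x y assume "x \<in> int_span2 a b" "y \<in> int_span2 a b"
  then obtain m n m' n' :: int
    where "x = of_int m * a + of_int n * b" "y = of_int m' * a + of_int n' * b"
    unfolding int_span2_def by blast
  then have "x - y = of_int (m - m') * a + of_int (n - n') * b" by (simp add: algebra_simps)
  then show "x - y \<in> int_span2 a b" unfolding int_span2_def by blast
qed

lemma torsion_mod_int_span2:
  fixes L :: "'a::comm_ring_1 set"
  assumes L: "add_subgroup L" and "torsion_mod L {a}" "torsion_mod L {b}"
  shows "torsion_mod L (int_span2 a b)"
proof -
  obtain n1 n2 where n: "n1 > 0" "n2 > 0" "of_nat n1 * a \<in> L" "of_nat n2 * b \<in> L"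
    using assms(2,3) unfolding torsion_mod_def by auto
  have "of_nat (n1 * n2) * x \<in> L" if x_in: "x \<in> int_span2 a b" for x
  proof -
    obtain m n :: int where x: "x = of_int m * a + of_int n * b"
      using x_in unfolding int_span2_def by blast
    have "of_nat (n1 * n2) * x
        = of_int (m * int n2) * (of_nat n1 * a) + of_int (n * int n1) * (of_nat n2 * b)"
      unfolding x by (simp add: algebra_simps)
    then show ?thesis using L n by (metis add_subgroup_add add_subgroup_of_int_mult)
  qed
  then show ?thesis unfolding torsion_mod_def using n by (intro exI[of _ "n1 * n2"]) auto
qed

lemma torsion_mod_int_span2_cocompact:
  fixes G L :: "'a::{real_normed_field,heine_borel} set"
  assumes "add_subgroup G" "discrete G" "add_subgroup L" "L \<subseteq> G"
    and "\<And>z. z \<in> G \<Longrightarrow> \<exists>l\<in>L. norm (z - l) \<le> R" and "a \<in> G" "b \<in> G"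
  shows "torsion_mod L (int_span2 a b)"
  using torsion_mod_int_span2 torsion_mod_cocompact_subgroup[OF assms(1-5)] assms by blast

text \<open>\<open>cross a z\<close> is the determinant of the real \<open>2\<times>2\<close> matrix with columns \<open>a\<close> and \<open>z\<close>;
  for \<open>norm a = 1\<close> it is the coordinate of \<open>z\<close> orthogonal to the line \<open>\<real>a\<close>.\<close>

definition cross :: "complex \<Rightarrow> complex \<Rightarrow> real" where
  "cross a z = Im (cnj a * z)"

lemma cross_add [simp]: "cross a (x + y) = cross a x + cross a y"
  by (simp add: cross_def algebra_simps)

lemma cross_diff [simp]: "cross a (x - y) = cross a x - cross a y"
  by (simp add: cross_def algebra_simps)

lemma cross_of_int_mult [simp]: "cross a (of_int m * x) = of_int m * cross a x"
  by (simp add: cross_def algebra_simps)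

lemma cross_of_nat_mult [simp]: "cross a (of_nat n * x) = of_nat n * cross a x"
  by (simp add: cross_def algebra_simps)

lemma cross_swap: "cross a z = - cross z a"
  by (simp add: cross_def algebra_simps)

lemma abs_cross_le: "\<bar>cross a z\<bar> \<le> norm a * norm z"
  unfolding cross_def by (metis abs_Im_le_cmod complex_mod_cnj norm_mult)

lemma cross_ne_0_if_independent:
  assumes indep: "\<forall>r s::real. r *\<^sub>R a + s *\<^sub>R b = 0 \<longrightarrow> r = 0 \<and> s = 0"
  shows "cross a b \<noteq> 0"
proof
  assume "cross a b = 0"
  then have "cnj a * b = of_real (Re (cnj a * b))" by (simp add: cross_def complex_eq_iff)
  then have "of_real ((norm a)\<^sup>2) * b = of_real (Re (cnj a * b)) * a"
    by (metis complex_norm_square mult.assoc mult.commute)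
  then have "Re (cnj a * b) *\<^sub>R a + (- (norm a)\<^sup>2) *\<^sub>R b = 0"
    by (simp add: scaleR_conv_of_real)
  then have "norm a = 0" using indep by (metis neg_equal_0_iff_equal power_eq_0_iff)
  then show False using indep[rule_format, of 1 0] by simp
qed

lemma is_latticeE:
  assumes "is_lattice L"
  obtains a b where "cross a b \<noteq> 0" "L = int_span2 a b"
  using assms cross_ne_0_if_independent unfolding is_lattice_def int_span2_def by blast

lemma real_coordinates_if_cross_ne_0:
  assumes "cross a b \<noteq> 0"
  shows "z = of_real (cross z b / cross a b) * a + of_real (cross a z / cross a b) * b"
proof -
  have "Re z * cross a b = cross z b * Re a + cross a z * Re b"
    "Im z * cross a b = cross z b * Im a + cross a z * Im b"
    by (simp_all add: cross_def algebra_simps)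
  then show ?thesis using assms by (simp add: complex_eq_iff field_simps)
qed

lemma discrete_int_span2:
  assumes D: "cross a b \<noteq> 0"
  shows "discrete (int_span2 a b)"
  unfolding discrete_add_subgroup_iff[OF add_subgroup_int_span2]
proof (intro exI conjI ballI impI)
  have a0: "a \<noteq> 0" using D by (auto simp: cross_def)
  show "min (norm a) (\<bar>cross a b\<bar> / norm a) > 0" using a0 D by simp
  fix x assume "x \<in> int_span2 a b" "x \<noteq> 0"
  then obtain m n :: int where x: "x = of_int m * a + of_int n * b" "x \<noteq> 0"
    unfolding int_span2_def by blast
  show "min (norm a) (\<bar>cross a b\<bar> / norm a) \<le> norm x"
  proof (cases "n = 0")
    case True
    then have "norm x = \<bar>real_of_int m\<bar> * norm a" "m \<noteq> 0" using x by (auto simp: norm_mult)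
    moreover have "1 \<le> \<bar>real_of_int m\<bar>" using \<open>m \<noteq> 0\<close> by linarith
    ultimately have "norm a \<le> norm x" by (simp add: mult_le_cancel_right1)
    then show ?thesis by linarith
  next
    case False
    have "1 \<le> \<bar>real_of_int n\<bar>" using False by linarith
    then have "\<bar>cross a b\<bar> \<le> \<bar>of_int n * cross a b\<bar>"
      by (simp add: abs_mult mult_le_cancel_right1)
    also have "\<dots> = \<bar>cross a x\<bar>" by (simp add: x cross_def algebra_simps)
    also have "\<dots> \<le> norm a * norm x" by (rule abs_cross_le)
    finally have "\<bar>cross a b\<bar> / norm a \<le> norm x" using a0 by (simp add: divide_le_eq mult.commute)
    then show ?thesis by linarith
  qed
qed

lemma int_span2_cocompact:
  assumes "cross a b \<noteq> 0"
  shows "\<exists>l\<in>int_span2 a b. norm (z - l) \<le> norm a + norm b"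
proof -
  define x y where "x = cross z b / cross a b" and "y = cross a z / cross a b"
  have z: "z = of_real x * a + of_real y * b"
    unfolding x_def y_def by (rule real_coordinates_if_cross_ne_0[OF assms])
  define l where "l = of_int \<lfloor>x\<rfloor> * a + of_int \<lfloor>y\<rfloor> * b"
  have "z - l = of_real (frac x) * a + of_real (frac y) * b"
    unfolding z l_def frac_def by (simp add: algebra_simps)
  also have "norm \<dots> \<le> frac x * norm a + frac y * norm b"
    by (metis (no_types, lifting) frac_ge_0 norm_mult norm_of_real norm_triangle_le
        abs_of_nonneg order_refl add_mono)
  also have "\<dots> \<le> norm a + norm b"
    by (intro add_mono mult_left_le_one_le) (auto simp: frac_lt_1 less_imp_le)
  finally show ?thesis unfolding l_def int_span2_def by blast
qed

lemma add_subgroup_lattice: "is_lattice L \<Longrightarrow> add_subgroup L"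
  by (metis is_latticeE add_subgroup_int_span2)

lemma discrete_lattice: "is_lattice L \<Longrightarrow> discrete L"
  by (metis is_latticeE discrete_int_span2)

lemma lattice_cross_ne_0:
  assumes "is_lattice L" "d \<noteq> 0"
  obtains c where "c \<in> L" "cross d c \<noteq> 0"
proof -
  obtain a b where ab: "cross a b \<noteq> 0" "L = int_span2 a b" using assms(1) by (rule is_latticeE)
  have "a \<in> L" "b \<in> L" unfolding ab(2) by (rule int_span2_generators)+
  moreover have "cross d a \<noteq> 0 \<or> cross d b \<noteq> 0"
  proof (rule ccontr)
    assume "\<not> ?thesis"
    then have "cross d a = 0" "cross d b = 0" by auto
    moreover note d = real_coordinates_if_cross_ne_0[OF ab(1), of d]
    ultimately have "d = 0" by (simp add: cross_swap[of a d])
    then show False using assms(2) by simp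
  qed
  ultimately show ?thesis using that by blast
qed

lemma torsion_mod_lattice_if_discrete_sum:
  assumes L: "is_lattice L" and M: "is_lattice M" and disc: "discrete (L + M)"
  shows "torsion_mod L M"
proof -
  obtain a b where ab: "cross a b \<noteq> 0" "L = int_span2 a b" using L by (rule is_latticeE)
  obtain c d where cd: "M = int_span2 c d" using M by (rule is_latticeE)
  have sL: "add_subgroup L" and sM: "add_subgroup M" using L M add_subgroup_lattice by auto
  have LM: "L \<subseteq> L + M" "M \<subseteq> L + M"
    using subset_set_plus_right[OF add_subgroup_0[OF sM]] set_zero_plus2[OF add_subgroup_0[OF sL]]
    by auto
  show ?thesis unfolding cd
  proof (rule torsion_mod_int_span2_cocompact[OF add_subgroup_set_plus[OF sL sM] disc sL LM(1)])
    show "\<exists>l\<in>L. norm (z - l) \<le> norm a + norm b" for z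
      unfolding ab(2) by (rule int_span2_cocompact[OF ab(1)])
    show "c \<in> L + M" "d \<in> L + M" using LM(2) int_span2_generators[where a=c and b=d] unfolding cd by auto
  qed
qed

lemma discrete_lattice_plus_sum:
  assumes "finite I" "is_lattice L"
    and "\<And>i. i \<in> I \<Longrightarrow> is_lattice (\<Lambda> i)" "\<And>i. i \<in> I \<Longrightarrow> discrete (L + \<Lambda> i)"
  shows "discrete (L + sum \<Lambda> I)"
proof -
  have sL: "add_subgroup L" using assms(2) add_subgroup_lattice by blast
  have "torsion_mod L (L + sum \<Lambda> I)"
    using assms torsion_mod_lattice_if_discrete_sum
    by (intro torsion_mod_set_plus[OF sL] torsion_mod_refl torsion_mod_set_sum[OF sL]) auto
  moreover have "add_subgroup (L + sum \<Lambda> I)"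
    using assms add_subgroup_lattice by (intro add_subgroup_set_plus add_subgroup_set_sum) auto
  ultimately show ?thesis
    using discrete_if_torsion_mod sL discrete_lattice[OF assms(2)] by blast
qed

lemma line_in_closure_of_limit_direction:
  fixes G :: "'a::real_normed_vector set"
  assumes G: "add_subgroup G" and h: "\<And>n. h n \<in> G" "h \<longlonglongrightarrow> 0"
    and direction: "(\<lambda>n. sgn (h n)) \<longlonglongrightarrow> d"
  shows "t *\<^sub>R d \<in> closure G"
proof -
  define w where "w n = real_of_int \<lfloor>t / norm (h n)\<rfloor> *\<^sub>R h n" for n
  have "w n \<in> G" for n unfolding w_def using G h(1) add_subgroup_scaleR_of_int by blast
  moreover have bound: "norm (w n - t *\<^sub>R d) \<le> norm (h n) + \<bar>t\<bar> * norm (sgn (h n) - d)" for n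
  proof -
    define q where "q = t / norm (h n)"
    have "q *\<^sub>R h n = t *\<^sub>R sgn (h n)" by (simp add: q_def sgn_div_norm divide_inverse_commute)
    have "w n - t *\<^sub>R d = (of_int \<lfloor>q\<rfloor> - q) *\<^sub>R h n + (q *\<^sub>R h n - t *\<^sub>R d)"
      unfolding w_def q_def by (simp add: algebra_simps)
    also have "\<dots> = (of_int \<lfloor>q\<rfloor> - q) *\<^sub>R h n + t *\<^sub>R (sgn (h n) - d)"
      unfolding \<open>q *\<^sub>R h n = t *\<^sub>R sgn (h n)\<close> by (simp add: scaleR_diff_right)
    also have "norm \<dots> \<le> \<bar>of_int \<lfloor>q\<rfloor> - q\<bar> * norm (h n) + \<bar>t\<bar> * norm (sgn (h n) - d)"
      by (rule norm_triangle_le) simp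
    also have "\<dots> \<le> norm (h n) + \<bar>t\<bar> * norm (sgn (h n) - d)"
      by (intro add_mono mult_left_le_one_le order_refl norm_ge_zero abs_ge_zero) linarith
    finally show ?thesis .
  qed
  have "(\<lambda>n. norm (h n) + \<bar>t\<bar> * norm (sgn (h n) - d)) \<longlonglongrightarrow> 0 + \<bar>t\<bar> * 0"
    using h(2) direction
    by (intro tendsto_intros) (simp_all add: tendsto_norm_zero_iff LIM_zero_iff)
  then have "(\<lambda>n. norm (h n) + \<bar>t\<bar> * norm (sgn (h n) - d)) \<longlonglongrightarrow> 0" by simp
  then have "(\<lambda>n. w n - t *\<^sub>R d) \<longlonglongrightarrow> 0"
    by (rule Lim_null_comparison[rotated]) (simp add: bound always_eventually)
  then have "w \<longlonglongrightarrow> t *\<^sub>R d" by (simp add: LIM_zero_iff)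
  ultimately show ?thesis unfolding closure_sequential by blast
qed

lemma line_in_closure_if_not_discrete:
  fixes G :: "'a::{real_normed_vector,perfect_space,heine_borel} set"
  assumes G: "add_subgroup G" and "\<not> discrete G"
  obtains d where "norm d = 1" "\<forall>t. t *\<^sub>R d \<in> closure G"
proof -
  have "\<exists>x\<in>G. x \<noteq> 0 \<and> norm x < inverse (real (Suc n))" for n
  proof -
    have "\<not> (\<forall>x\<in>G. x \<noteq> 0 \<longrightarrow> inverse (real (Suc n)) \<le> norm x)"
      using assms(2) discrete_add_subgroup_iff[OF G]
      by (metis inverse_positive_iff_positive of_nat_0_less_iff zero_less_Suc)
    then show ?thesis by (auto simp: not_le)
  qed
  then obtain h where h: "\<And>n. h n \<in> G" "\<And>n. h n \<noteq> 0" "\<And>n. norm (h n) < inverse (real (Suc n))"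
    by metis
  have h0: "h \<longlonglongrightarrow> 0"
    by (rule Lim_null_comparison[OF always_eventually LIMSEQ_inverse_real_of_nat])
      (intro allI less_imp_le h(3))
  have "\<forall>n. sgn (h n) \<in> sphere 0 1" using h(2) by (simp add: norm_sgn)
  then obtain d r where d: "d \<in> sphere 0 1" "strict_mono r" "((\<lambda>n. sgn (h n)) \<circ> r) \<longlonglongrightarrow> d"
    using seq_compactE[OF compact_imp_seq_compact[OF compact_sphere]] by metis
  have "(h \<circ> r) \<longlonglongrightarrow> 0" using LIMSEQ_subseq_LIMSEQ[OF h0 d(2)] .
  then have "t *\<^sub>R d \<in> closure G" for t
    using line_in_closure_of_limit_direction[OF G, of "h \<circ> r"] h(1) d(3)
    by (simp add: comp_def)
  then show ?thesis using that d(1) by simp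
qed

lemma real_add_subgroup_dense:
  fixes G :: "real set"
  assumes G: "add_subgroup G" and "\<not> discrete G"
  shows "closure G = UNIV"
proof -
  have "\<exists>y\<in>G. \<bar>y - r\<bar> < e" if "e > 0" for r e :: real
  proof -
    obtain x where x: "x \<in> G" "x \<noteq> 0" "\<bar>x\<bar> < e"
      using assms \<open>e > 0\<close> discrete_add_subgroup_iff[OF G] by (force simp: not_le)
    define m where "m = \<lfloor>r / x\<rfloor>"
    have "\<bar>of_int m * x - r\<bar> = \<bar>of_int m - r / x\<bar> * \<bar>x\<bar>"
      using x(2) by (simp add: abs_mult[symmetric] field_simps)
    also have "\<dots> \<le> \<bar>x\<bar>" unfolding m_def
      using mult_right_mono[of "\<bar>of_int \<lfloor>r / x\<rfloor> - r / x\<bar>" 1 "\<bar>x\<bar>"] by linarith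
    finally have "\<bar>of_int m * x - r\<bar> < e" using x(3) by linarith
    then show ?thesis using add_subgroup_of_int_mult[OF G x(1)] by blast
  qed
  then have "r \<in> closure G" for r unfolding closure_approachable dist_real_def by blast
  then show ?thesis by blast
qed

lemma dense_if_line_and_cross_not_discrete:
  assumes G: "add_subgroup G" and d: "norm d = 1" and line: "\<forall>t. t *\<^sub>R d \<in> closure G"
    and "\<not> discrete (cross d ` G)"
  shows "closure G = UNIV"
proof -
  have dense: "closure (cross d ` G) = UNIV"
    using assms by (intro real_add_subgroup_dense add_subgroup_image) auto
  have "\<exists>y\<in>G. dist y z < e" if "e > 0" for z e
  proof -
    have "cross d z \<in> closure (cross d ` G)" using dense by simp
    then obtain y where "y \<in> cross d ` G" "\<bar>y - cross d z\<bar> < e / 2"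
      unfolding closure_approachable dist_real_def using \<open>e > 0\<close> by (meson half_gt_zero)
    then obtain g where g: "g \<in> G" "\<bar>cross d g - cross d z\<bar> < e / 2" by blast
    define w where "w = cnj d * (z - g)"
    obtain g' where g': "g' \<in> G" "dist g' (Re w *\<^sub>R d) < e / 2"
      using line \<open>e > 0\<close> unfolding closure_approachable by (meson half_gt_zero)
    have "d * cnj d = 1" using d complex_norm_square[of d] by simp
    then have "z - g = d * w" unfolding w_def by (simp add: mult.assoc[symmetric])
    \<comment> \<open>\<open>Re w *\<^sub>R d\<close> is the orthogonal projection of \<open>z - g\<close> onto \<open>\<real>d\<close>\<close>
    then have "z - g - Re w *\<^sub>R d = d * (w - of_real (Re w))"
      by (simp add: scaleR_conv_of_real algebra_simps)
    also have "w - of_real (Re w) = \<i> * of_real (cross d z - cross d g)"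
      by (simp add: complex_eq_iff w_def cross_def algebra_simps)
    finally have "norm (z - g - Re w *\<^sub>R d) < e / 2"
      using d g(2) by (simp add: norm_mult abs_minus_commute flip: of_real_diff)
    moreover have "dist (g + g') z \<le> norm (g' - Re w *\<^sub>R d) + norm (z - g - Re w *\<^sub>R d)"
      unfolding dist_norm
      using norm_triangle_ineq4[of "g' - Re w *\<^sub>R d" "z - g - Re w *\<^sub>R d"]
      by (simp add: algebra_simps)
    ultimately have "dist (g + g') z < e" using g'(2) by (simp add: dist_norm)
    then show ?thesis using g g' G add_subgroup_add by blast
  qed
  then have "z \<in> closure G" for z unfolding closure_approachable by blast
  then show ?thesis by blast
qed

lemma int_multiples_cocompact:
  fixes p z :: real
  assumes "p \<noteq> 0"
  shows "\<exists>l\<in>range (\<lambda>m::int. of_int m * p). norm (z - l) \<le> \<bar>p\<bar>"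
proof -
  have "z - of_int \<lfloor>z / p\<rfloor> * p = (z / p - of_int \<lfloor>z / p\<rfloor>) * p"
    using assms by (simp add: field_simps)
  then have "norm (z - of_int \<lfloor>z / p\<rfloor> * p) = \<bar>z / p - of_int \<lfloor>z / p\<rfloor>\<bar> * \<bar>p\<bar>"
    by (simp add: abs_mult)
  also have "\<dots> \<le> \<bar>p\<bar>" by (intro mult_left_le_one_le abs_ge_zero) linarith
  finally show ?thesis by blast
qed

lemma torsion_mod_cross:
  assumes G: "add_subgroup G" "discrete (cross d ` G)" and c: "c \<in> G" "cross d c \<noteq> 0"
    and \<Lambda>: "is_lattice \<Lambda>" "\<Lambda> \<subseteq> G"
  shows "torsion_mod (cross d -` range (\<lambda>m::int. of_int m * cross d c)) \<Lambda>"
proof -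
  let ?P = "range (\<lambda>m::int. of_int m * cross d c)"
  obtain a b where \<Lambda>_eq: "\<Lambda> = int_span2 a b" using \<Lambda>(1) by (rule is_latticeE)
  have "a \<in> G" "b \<in> G" using \<Lambda>(2) int_span2_generators[where a=a and b=b] unfolding \<Lambda>_eq by auto
  moreover have "of_int m * cross d c \<in> cross d ` G" for m :: int
    using add_subgroup_of_int_mult[OF G(1) c(1), of m] by (metis cross_of_int_mult image_eqI)
  ultimately have "torsion_mod ?P (int_span2 (cross d a) (cross d b))"
  proof (intro torsion_mod_int_span2_cocompact[OF add_subgroup_image[OF G(1) cross_diff[of d]] G(2)
        add_subgroup_int_multiples])
    show "\<exists>l\<in>?P. norm (z - l) \<le> \<bar>cross d c\<bar>" for z by (rule int_multiples_cocompact[OF c(2)])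
  qed auto
  moreover have "cross d ` \<Lambda> \<subseteq> int_span2 (cross d a) (cross d b)"
    unfolding \<Lambda>_eq int_span2_def by fastforce
  ultimately have "torsion_mod ?P (cross d ` \<Lambda>)" by (rule torsion_mod_subset)
  then show ?thesis by (intro torsion_mod_vimage) simp_all
qed

lemma not_dense_if_torsion_mod_cross:
  assumes d: "norm d = 1" and "p \<noteq> 0" and "torsion_mod (cross d -` range (\<lambda>m::int. of_int m * p)) S"
  shows "closure S \<noteq> UNIV"
proof
  assume "closure S = UNIV"
  obtain N :: nat where N: "N > 0" "\<forall>x\<in>S. of_nat N * cross d x \<in> range (\<lambda>m::int. of_int m * p)"
    using assms(3) unfolding torsion_mod_def by auto
  define q where "q = p / N"
  have "q \<noteq> 0" using N(1) \<open>p \<noteq> 0\<close> by (simp add: q_def)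
  define z where "z = \<i> * of_real (\<bar>q\<bar> / 2) * d"
  have "d * cnj d = 1" using d complex_norm_square[of d] by simp
  moreover have "cnj d * z = \<i> * of_real (\<bar>q\<bar> / 2) * (d * cnj d)" by (simp add: z_def algebra_simps)
  ultimately have "cnj d * z = \<i> * of_real (\<bar>q\<bar> / 2)" by simp
  then have "cross d z = Im (\<i> * of_real (\<bar>q\<bar> / 2))" unfolding cross_def by (rule arg_cong)
  then have "cross d z = \<bar>q\<bar> / 2" by simp
  obtain s where s: "s \<in> S" "dist s z < \<bar>q\<bar> / 2"
    using \<open>closure S = UNIV\<close> \<open>q \<noteq> 0\<close> closure_approachable[of z S]
    by (metis UNIV_I half_gt_zero zero_less_abs_iff)
  have "\<bar>cross d s - \<bar>q\<bar> / 2\<bar> = \<bar>cross d (s - z)\<bar>" using \<open>cross d z = \<bar>q\<bar> / 2\<close> by simp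
  also have "\<dots> \<le> norm (s - z)" using abs_cross_le[of d "s - z"] d by simp
  also have "\<dots> < \<bar>q\<bar> / 2" using s(2) by (simp add: dist_norm)
  finally have pos: "0 < cross d s" and lt: "cross d s < \<bar>q\<bar>" unfolding abs_less_iff by linarith+
  obtain m :: int where "of_nat N * cross d s = of_int m * p" using N(2) s(1) by (blast elim: rangeE)
  then have m: "cross d s = of_int m * q" using N(1) by (simp add: q_def field_simps)
  then have "m \<noteq> 0" using pos by auto
  then have "1 \<le> \<bar>real_of_int m\<bar>" by linarith
  then have "\<bar>q\<bar> \<le> \<bar>real_of_int m\<bar> * \<bar>q\<bar>" by (simp add: mult_le_cancel_right1)
  also have "\<dots> = cross d s" using m pos by (simp add: abs_mult[symmetric])
  finally show False using lt by linarith
qed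

lemma dense_lattice_triple_sum:
  assumes I: "finite I" "j \<in> I" and lat: "is_lattice L" "\<And>i. i \<in> I \<Longrightarrow> is_lattice (\<Lambda> i)"
    and nd: "\<not> discrete (L + \<Lambda> j)" and dense: "closure (L + sum \<Lambda> I) = UNIV"
  shows "\<exists>k\<in>I. closure (L + \<Lambda> j + \<Lambda> k) = UNIV"
proof (rule ccontr)
  assume no_k: "\<not> ?thesis"
  define H where "H = L + \<Lambda> j"
  have sL: "add_subgroup L" and s\<Lambda>: "\<And>i. i \<in> I \<Longrightarrow> add_subgroup (\<Lambda> i)"
    using lat add_subgroup_lattice by auto
  have sH: "add_subgroup H" unfolding H_def using sL s\<Lambda>[OF I(2)] by (rule add_subgroup_set_plus)
  have LH: "L \<subseteq> H" unfolding H_def using subset_set_plus_right add_subgroup_0 s\<Lambda>[OF I(2)] by blast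
  obtain d where d: "norm d = 1" "\<forall>t. t *\<^sub>R d \<in> closure H"
    using line_in_closure_if_not_discrete[OF sH] nd unfolding H_def by blast
  have sG: "add_subgroup (H + \<Lambda> k)" if "k \<in> I" for k
    using sH s\<Lambda>[OF that] by (rule add_subgroup_set_plus)
  have HG: "H \<subseteq> H + \<Lambda> k" "\<Lambda> k \<subseteq> H + \<Lambda> k" if "k \<in> I" for k
    using subset_set_plus_right[OF add_subgroup_0[OF s\<Lambda>[OF that]]]
      set_zero_plus2[OF add_subgroup_0[OF sH]] by auto
  have disc: "discrete (cross d ` (H + \<Lambda> k))" if "k \<in> I" for k
  proof -
    have "\<forall>t. t *\<^sub>R d \<in> closure (H + \<Lambda> k)" using d(2) closure_mono[OF HG(1)[OF that]] by blast
    then show ?thesis using dense_if_line_and_cross_not_discrete[OF sG[OF that] d(1)] no_k that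
      unfolding H_def by blast
  qed
  have "d \<noteq> 0" using d(1) by auto
  then obtain c where c: "c \<in> L" "cross d c \<noteq> 0" by (rule lattice_cross_ne_0[OF lat(1)])
  define M where "M = cross d -` range (\<lambda>m::int. of_int m * cross d c)"
  have sM: "add_subgroup M" unfolding M_def by (rule add_subgroup_vimage[OF add_subgroup_int_multiples]) simp
  have cG: "c \<in> H + \<Lambda> k" if "k \<in> I" for k using c(1) LH HG(1)[OF that] by blast
  have "L \<subseteq> H + \<Lambda> j" using LH HG(1)[OF I(2)] by blast
  then have "torsion_mod M L"
    unfolding M_def by (rule torsion_mod_cross[OF sG disc cG c(2) lat(1), OF I(2) I(2) I(2)])
  moreover have "torsion_mod M (\<Lambda> k)" if "k \<in> I" for k
    unfolding M_def
    by (rule torsion_mod_cross[OF sG[OF that] disc[OF that] cG[OF that] c(2) lat(2)[OF that] HG(2)[OF that]])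
  ultimately have "torsion_mod M (L + sum \<Lambda> I)"
    using I(1) by (intro torsion_mod_set_plus[OF sM] torsion_mod_set_sum[OF sM])
  then show False using not_dense_if_torsion_mod_cross[OF d(1) c(2)] dense unfolding M_def by blast
qed

theorem lemma2p2:
  fixes g :: nat and \<Lambda> :: "nat \<Rightarrow> complex set"
  assumes "g \<ge> 2"
    and "\<And>i. i \<in> {1..g} \<Longrightarrow> is_lattice (\<Lambda> i)"
    and "\<not> discrete (\<Sum>i\<in>{1..g}. \<Lambda> i)"
  shows "(\<exists>j\<in>{2..g}. \<not> discrete (\<Lambda> 1 + \<Lambda> j))
    \<and> (closure (\<Sum>i\<in>{1..g}. \<Lambda> i) = UNIV \<longrightarrow>
        (\<forall>j\<in>{2..g}. \<not> discrete (\<Lambda> 1 + \<Lambda> j) \<longrightarrow>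
           (\<exists>k\<in>{2..g}. closure (\<Lambda> 1 + \<Lambda> j + \<Lambda> k) = UNIV)))"
proof -
  have sum_eq: "(\<Sum>i\<in>{1..g}. \<Lambda> i) = \<Lambda> 1 + (\<Sum>i\<in>{2..g}. \<Lambda> i)"
    using assms(1) by (simp add: sum.atLeast_Suc_atMost numeral_2_eq_2)
  have lat: "is_lattice (\<Lambda> 1)" "\<And>i. i \<in> {2..g} \<Longrightarrow> is_lattice (\<Lambda> i)"
    using assms(1,2) by auto
  have "\<exists>j\<in>{2..g}. \<not> discrete (\<Lambda> 1 + \<Lambda> j)"
  proof (rule ccontr)
    assume "\<not> ?thesis"
    then have "discrete (\<Lambda> 1 + (\<Sum>i\<in>{2..g}. \<Lambda> i))"
      by (intro discrete_lattice_plus_sum lat) auto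
    then show False using assms(3) sum_eq by simp
  qed
  moreover have "\<exists>k\<in>{2..g}. closure (\<Lambda> 1 + \<Lambda> j + \<Lambda> k) = UNIV"
    if "closure (\<Sum>i\<in>{1..g}. \<Lambda> i) = UNIV" "j \<in> {2..g}" "\<not> discrete (\<Lambda> 1 + \<Lambda> j)" for j
    using dense_lattice_triple_sum[of "{2..g}" j "\<Lambda> 1" \<Lambda>] lat that sum_eq by auto
  ultimately show ?thesis by blast
qed

end
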